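(* Let $m\ge 2$ and let $k_1,k_2,\dots,k_{2m}$ be positive integers such that $k_i+k_{i+1}\ge 3$ for all $i\in\{1,3,\dots,2m-1\}$. Then every tournament of order $m+\sum_{i=1}^{2m}k_i$ contains a subdivision of $C(k_1,k_2,\dots,k_{2m})$ having at least $m$ non-dilated blocks.
   Context: A tournament is an orientation of a complete graph. A block of an oriented path or cycle is a maximal directed subpath. $C(k_1,k_2,\dots,k_{2m})$ denotes the oriented cycle with $2m$ blocks of consecutive lengths $k_1,k_2,\dots,k_{2m}$. A subdivision of a digraph $H$ is obtained by replacing each arc $(u,v)$ by a directed $uv$-path of length at least $1$ (internally disjoint); a subdivision $H'$ of a $2m$-blocks cycle $C$ is again a $2m$-blocks cycle whose blocks correspond to those of $C$. A block of $H'$ is dilated if its length in $H'$ is strictly greater than the length of the corresponding block of $C$, and non-dilated otherwise. *)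

theory Defs
  imports Main
begin

definition tournament :: "'a set \<Rightarrow> ('a \<Rightarrow> 'a \<Rightarrow> bool) \<Rightarrow> bool" where
  "tournament V A \<longleftrightarrow> finite V
     \<and> (\<forall>u v. A u v \<longrightarrow> u \<in> V \<and> v \<in> V)
     \<and> (\<forall>u. \<not> A u u)
     \<and> (\<forall>u v. A u v \<longrightarrow> \<not> A v u)
     \<and> (\<forall>u\<in>V. \<forall>v\<in>V. u \<noteq> v \<longrightarrow> A u v \<or> A v u)"

text \<open>The digraph (V,A) contains (as a subdigraph) the oriented cycle
  C(l 0, l 1, ..., l (2m-1)) with 2m blocks (0-indexed): the cycle visits the
  distinct vertices f 0, ..., f (n-1) (n = sum of block lengths) cyclically;
  block i consists of the positions j with (sum of l t, t<i) \<le> j < (sum of l t, t\<le>i),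
  and the edge between f j and f ((j+1) mod n) is directed forward along the
  traversal for even i and backward for odd i.  Since the 2m blocks have positive
  length and alternate in direction, these are exactly the maximal directed subpaths.\<close>
definition contains_cycle :: "'a set \<Rightarrow> ('a \<Rightarrow> 'a \<Rightarrow> bool) \<Rightarrow> nat \<Rightarrow> (nat \<Rightarrow> nat) \<Rightarrow> bool" where
  "contains_cycle V A m l \<longleftrightarrow>
     (\<exists>f :: nat \<Rightarrow> 'a.
        inj_on f {0..<(\<Sum>i<2*m. l i)} \<and> f ` {0..<(\<Sum>i<2*m. l i)} \<subseteq> V \<and>
        (\<forall>i<2*m. \<forall>j. (\<Sum>t<i. l t) \<le> j \<and> j < (\<Sum>t<Suc i. l t) \<longrightarrow>
            (if even i then A (f j) (f (Suc j mod (\<Sum>t<2*m. l t)))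
             else A (f (Suc j mod (\<Sum>t<2*m. l t))) (f j))))"

end

(* Split V into m parts of sizes k(2j) + k(2j+1) + 1.  A tournament on a + b + 1 vertices with
   a, b >= 1 and a + b >= 3 is spanned by two directed paths with a and b arcs ending in a common
   vertex: induct on a + b, deleting a vertex of in-degree less than a and inserting it back into the
   path with a arcs (a vertex not dominated by every vertex of a directed path can be inserted into
   it).  If there is no such vertex, the tournament is regular and an arc is deleted instead; 4 and 5
   vertices are the base cases.  Chaining these two-block paths of the parts cyclically, the arc
   between the last vertex of one part and the first vertex of the next one lengthens exactly one of
   the two blocks it touches, so exactly m of the 2m blocks are dilated. *)

theory Submission
  imports Defs
begin

(* Unlike tournament, arcs may leave W, so the notion passes to subsets. *)
definition tournament_on :: "'a set \<Rightarrow> ('a \<Rightarrow> 'a \<Rightarrow> bool) \<Rightarrow> bool" where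
  "tournament_on W A \<longleftrightarrow>
     (\<forall>u\<in>W. \<forall>v\<in>W. A u v \<longrightarrow> \<not> A v u) \<and> (\<forall>u\<in>W. \<forall>v\<in>W. u \<noteq> v \<longrightarrow> A u v \<or> A v u)"

lemma tournament_on_subset: "tournament_on W A \<Longrightarrow> U \<subseteq> W \<Longrightarrow> tournament_on U A"
  unfolding tournament_on_def by blast

lemma tournament_on_asym: "tournament_on W A \<Longrightarrow> u \<in> W \<Longrightarrow> v \<in> W \<Longrightarrow> A u v \<Longrightarrow> \<not> A v u"
  unfolding tournament_on_def by blast

lemma tournament_on_total:
  "tournament_on W A \<Longrightarrow> u \<in> W \<Longrightarrow> v \<in> W \<Longrightarrow> u \<noteq> v \<Longrightarrow> \<not> A u v \<Longrightarrow> A v u"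
  unfolding tournament_on_def by blast

lemma tournament_imp_tournament_on: "tournament V A \<Longrightarrow> tournament_on V A"
  unfolding tournament_def tournament_on_def by blast

definition indeg :: "'a set \<Rightarrow> ('a \<Rightarrow> 'a \<Rightarrow> bool) \<Rightarrow> 'a \<Rightarrow> nat" where
  "indeg W A v = card {u\<in>W. A u v}"

lemma card_le_indeg: "finite W \<Longrightarrow> S \<subseteq> {u\<in>W. A u v} \<Longrightarrow> card S \<le> indeg W A v"
  unfolding indeg_def by (rule card_mono) auto

lemma exists_not_in_neighbour:
  "finite W \<Longrightarrow> T \<subseteq> W \<Longrightarrow> indeg W A v < card T \<Longrightarrow> \<exists>z\<in>T. \<not> A z v"
  using card_le_indeg[of W T A v] by auto

lemma sum_indeg:
  assumes "finite W" "tournament_on W A"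
  shows "2 * (\<Sum>v\<in>W. indeg W A v) = card W * (card W - 1)"
proof -
  define In where "In = (SIGMA v:W. {u\<in>W. A u v})"
  define Out where "Out = (SIGMA v:W. {u\<in>W. A v u})"
  have "Out = prod.swap ` In"
    unfolding In_def Out_def by force
  then have "card Out = card In"
    by (simp add: card_image)
  moreover have "In \<inter> Out = {}"
    using tournament_on_asym[OF assms(2)] unfolding In_def Out_def by blast
  moreover have "In \<union> Out = (SIGMA v:W. W - {v})"
    using tournament_on_asym[OF assms(2)] tournament_on_total[OF assms(2)]
    unfolding In_def Out_def by blast
  moreover have "finite In" "finite Out"
    unfolding In_def Out_def using assms(1) by auto
  ultimately have "2 * card In = card (SIGMA v:W. W - {v})"
    by (metis card_Un_disjoint mult_2)
  also have "\<dots> = card W * (card W - 1)"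
    using assms(1) by simp
  finally show ?thesis
    unfolding In_def indeg_def using assms(1) by simp
qed

lemma exists_indeg_le_half:
  assumes "finite W" "W \<noteq> {}" "tournament_on W A"
  shows "\<exists>v\<in>W. 2 * indeg W A v \<le> card W - 1"
proof (rule ccontr)
  assume "\<not> ?thesis"
  then have "(\<Sum>v\<in>W. card W) \<le> (\<Sum>v\<in>W. 2 * indeg W A v)"
    by (intro sum_mono) auto
  then have "card W * card W \<le> card W * (card W - 1)"
    using sum_indeg[OF assms(1,3)] by (simp add: sum_distrib_left)
  moreover have "0 < card W"
    using assms(1,2) by (simp add: card_gt_0_iff)
  ultimately show False
    by simp
qed

lemma indeg_regular:
  assumes "finite W" "tournament_on W A" "card W = 2 * a + 1" "\<forall>v\<in>W. a \<le> indeg W A v"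
  shows "\<forall>v\<in>W. indeg W A v = a"
proof (rule ccontr)
  assume "\<not> ?thesis"
  then obtain w where "w \<in> W" "a < indeg W A w"
    using assms(4) le_neq_implies_less by blast
  then have "(\<Sum>v\<in>W. a) < (\<Sum>v\<in>W. indeg W A v)"
    using assms(1,4) by (intro sum_strict_mono_ex1) auto
  then show False
    using sum_indeg[OF assms(1,2)] assms(3) by simp
qed

lemma exists_indeg_ge_half:
  assumes "finite W" "W \<noteq> {}" "tournament_on W A"
  shows "\<exists>v\<in>W. card W - 1 \<le> 2 * indeg W A v"
proof (rule ccontr)
  assume "\<not> ?thesis"
  then have "(\<Sum>v\<in>W. 2 * indeg W A v) < (\<Sum>v\<in>W. card W - 1)"
    using assms(1,2) by (intro sum_strict_mono) auto
  then show False
    using sum_indeg[OF assms(1,3)] by (simp add: sum_distrib_left mult.commute)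
qed

lemma in_neighbours_eq_pair:
  assumes "finite W" "indeg W A v = 2" "x \<in> W" "y \<in> W" "x \<noteq> y" "A x v" "A y v"
  shows "{u\<in>W. A u v} = {x, y}"
  using assms by (intro card_seteq[symmetric]) (auto simp: indeg_def)

(* w goes in front of the first vertex it dominates, whose predecessor dominates w. *)
lemma successively_insert:
  assumes "tournament_on W A" "set (xs @ [p]) \<subseteq> W" "w \<in> W" "w \<notin> set (xs @ [p])"
    and "successively A (xs @ [p])" "\<exists>z\<in>set (xs @ [p]). \<not> A z w"
  shows "\<exists>ys zs. xs = ys @ zs \<and> successively A (ys @ w # zs @ [p])"
  using assms(2-)
proof (induction xs)
  case Nil
  then have "A w p"
    using tournament_on_total[OF assms(1), of p w] by simp
  then show ?case
    by (intro exI[of _ "[]"]) simp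
next
  case (Cons x xs)
  show ?case
  proof (cases "A w x")
    case True
    then show ?thesis
      using Cons.prems(4) by (intro exI[of _ "[]"] exI[of _ "x # xs"]) simp
  next
    case False
    then have "A x w"
      using tournament_on_total[OF assms(1), of w x] Cons.prems(1-3) by simp
    have path: "A x (hd (xs @ [p]))" "successively A (xs @ [p])"
      using Cons.prems(4) by (simp_all add: successively_Cons)
    moreover have "\<exists>z\<in>set (xs @ [p]). \<not> A z w"
      using Cons.prems(5) \<open>A x w\<close> by auto
    ultimately obtain ys zs where "xs = ys @ zs" "successively A (ys @ w # zs @ [p])"
      using Cons.IH Cons.prems(1-3) by auto
    moreover have "A x (hd (ys @ w # zs @ [p]))"
      using path(1) \<open>A x w\<close> \<open>xs = ys @ zs\<close> by (cases ys) auto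
    ultimately show ?thesis
      by (intro exI[of _ "x # ys"] exI[of _ zs]) (simp add: successively_Cons)
  qed
qed

definition converging_paths :: "('a \<Rightarrow> 'a \<Rightarrow> bool) \<Rightarrow> 'a list \<Rightarrow> 'a \<Rightarrow> 'a list \<Rightarrow> bool" where
  "converging_paths A xs p ys \<longleftrightarrow>
     successively A (xs @ [p]) \<and> successively A (ys @ [p]) \<and> distinct (xs @ p # ys)"

definition spanned_by_converging_paths :: "('a \<Rightarrow> 'a \<Rightarrow> bool) \<Rightarrow> 'a set \<Rightarrow> nat \<Rightarrow> nat \<Rightarrow> bool" where
  "spanned_by_converging_paths A W a b \<longleftrightarrow>
     (\<exists>xs p ys. converging_paths A xs p ys \<and> length xs = a \<and> length ys = b
        \<and> set (xs @ p # ys) = W)"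

lemma converging_paths_swap: "converging_paths A xs p ys \<longleftrightarrow> converging_paths A ys p xs"
  unfolding converging_paths_def by auto

lemma spanned_by_converging_paths_swap:
  assumes "spanned_by_converging_paths A W a b"
  shows "spanned_by_converging_paths A W b a"
proof -
  obtain xs p ys where "converging_paths A xs p ys" "length xs = a" "length ys = b"
    "set (xs @ p # ys) = W"
    using assms unfolding spanned_by_converging_paths_def by blast
  then show ?thesis
    unfolding spanned_by_converging_paths_def converging_paths_swap[of A xs]
    by (intro exI[of _ ys] exI[of _ p] exI[of _ xs]) auto
qed

lemma converging_paths_insert_left:
  assumes "converging_paths A xs p ys" "tournament_on W A" "set (xs @ p # ys) \<subseteq> W"
    and "w \<in> W - set (xs @ p # ys)" "\<exists>z\<in>set (xs @ [p]). \<not> A z w"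
  shows "\<exists>xs'. converging_paths A xs' p ys \<and> length xs' = Suc (length xs)
           \<and> set xs' = insert w (set xs)"
proof -
  obtain us vs where "xs = us @ vs" "successively A (us @ w # vs @ [p])"
    using successively_insert[OF assms(2), of xs p w] assms unfolding converging_paths_def by auto
  then show ?thesis
    using assms(1,4) unfolding converging_paths_def by (intro exI[of _ "us @ w # vs"]) auto
qed

lemma spanned_by_converging_paths_insert_both:
  assumes "converging_paths A xs p ys" "tournament_on W A" "set (xs @ p # ys) \<subseteq> W"
    and "u \<in> W - set (xs @ p # ys)" "v \<in> W - set (xs @ p # ys)" "u \<noteq> v"
    and "\<exists>z\<in>set (xs @ [p]). \<not> A z u" "\<exists>z\<in>set (ys @ [p]). \<not> A z v"
  shows "spanned_by_converging_paths A (insert u (insert v (set (xs @ p # ys))))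
           (Suc (length xs)) (Suc (length ys))"
proof -
  obtain xs' where xs': "converging_paths A xs' p ys" "length xs' = Suc (length xs)"
    "set xs' = insert u (set xs)"
    using converging_paths_insert_left[OF assms(1-4,7)] by blast
  obtain ys' where ys': "converging_paths A ys' p xs'" "length ys' = Suc (length ys)"
    "set ys' = insert v (set ys)"
    using converging_paths_insert_left[of A ys p xs' W v, OF _ assms(2)] xs' assms(3-6,8)
    by (auto simp: converging_paths_swap)
  have "converging_paths A xs' p ys'"
    using ys'(1) by (simp add: converging_paths_swap)
  moreover have "set (xs' @ p # ys') = insert u (insert v (set (xs @ p # ys)))"
    using xs'(3) ys'(3) by auto
  ultimately show ?thesis
    unfolding spanned_by_converging_paths_def using xs'(2) ys'(2) by blast
qed

lemma spanned_by_converging_paths_insert_low_indeg: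
  assumes "finite W" "tournament_on W A" "w \<in> W"
    and "spanned_by_converging_paths A (W - {w}) a b" "indeg W A w \<le> a"
  shows "spanned_by_converging_paths A W (Suc a) b"
proof -
  obtain xs p ys where xpy: "converging_paths A xs p ys" "length xs = a" "length ys = b"
    "set (xs @ p # ys) = W - {w}"
    using assms(4) unfolding spanned_by_converging_paths_def by blast
  have "card (set (xs @ [p])) = Suc a"
    using xpy(1,2) unfolding converging_paths_def by (simp add: distinct_card)
  then have non_dominating: "\<exists>z\<in>set (xs @ [p]). \<not> A z w"
    using xpy(4) assms(1,5) by (intro exists_not_in_neighbour[of W]) auto
  have "set (xs @ p # ys) \<subseteq> W" "w \<in> W - set (xs @ p # ys)"
    using xpy(4) assms(3) by auto
  then obtain xs' where xs': "converging_paths A xs' p ys" "length xs' = Suc a"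
    "set xs' = insert w (set xs)"
    using converging_paths_insert_left[OF xpy(1) assms(2) _ _ non_dominating] xpy(2) by auto
  have "set (xs' @ p # ys) = insert w (set (xs @ p # ys))"
    using xs'(3) by auto
  also have "\<dots> = W"
    using xpy(4) assms(3) by blast
  finally show ?thesis
    unfolding spanned_by_converging_paths_def using xs'(1,2) xpy(3)
    by (intro exI[of _ xs'] exI[of _ p] exI[of _ ys]) simp
qed

lemma spanned_by_converging_paths_insert_arc:
  assumes "finite W" "tournament_on W A" "u \<in> W" "v \<in> W" "A u v"
    and "\<forall>x\<in>W. indeg W A x = Suc b" "1 \<le> b"
    and "spanned_by_converging_paths A (W - {u, v}) b b"
  shows "spanned_by_converging_paths A W (Suc b) (Suc b)"
proof -
  obtain xs p ys where xpy: "converging_paths A xs p ys" "length xs = b" "length ys = b"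
    "set (xs @ p # ys) = W - {u, v}"
    using assms(8) unfolding spanned_by_converging_paths_def by blast
  have "u \<noteq> v"
    using assms(3,5) tournament_on_asym[OF assms(2)] by blast
  have S: "set (xs @ p # ys) \<subseteq> W" "u \<in> W - set (xs @ p # ys)" "v \<in> W - set (xs @ p # ys)"
    using xpy(4) assms(3,4) \<open>u \<noteq> v\<close> by auto
  have W: "insert u (insert v (set (xs @ p # ys))) = W" "insert v (insert u (set (xs @ p # ys))) = W"
    using xpy(4) assms(3,4) by blast+
  have distinct: "distinct (xs @ p # ys)"
    using xpy(1) unfolding converging_paths_def by blast
  have not_dominated: "\<exists>z\<in>T. \<not> A z x" if "T \<subseteq> W" "Suc (Suc b) \<le> card T" "x \<in> W" for T x
    using exists_not_in_neighbour[OF assms(1) that(1)] assms(6) that(2,3) by auto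
  have v_placeable: "\<exists>z\<in>set (zs @ [p]). \<not> A z v" if "zs = xs \<or> zs = ys" for zs
  proof -
    have "card (insert u (set (zs @ [p]))) = Suc (Suc b)"
      using that distinct xpy(2,3) S(2) by (auto simp: distinct_card)
    moreover have "insert u (set (zs @ [p])) \<subseteq> W"
      using that S(1) assms(3) by auto
    ultimately obtain z where "z \<in> insert u (set (zs @ [p]))" "\<not> A z v"
      using not_dominated[of "insert u (set (zs @ [p]))" v] assms(4) by auto
    then show ?thesis
      using assms(5) by auto
  qed
  show ?thesis
  proof (cases "\<exists>z\<in>set (ys @ [p]). \<not> A z u")
    case True
    then show ?thesis
      using spanned_by_converging_paths_insert_both[OF xpy(1) assms(2) S(1,3,2)] v_placeable[of xs]
        \<open>u \<noteq> v\<close> xpy(2,3) W(2) by auto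
  next
    case False
    have "card (set (xs @ p # ys)) = Suc (2 * b)"
      using distinct_card[OF distinct] xpy(2,3) by simp
    then obtain z where "z \<in> set (xs @ p # ys)" "\<not> A z u"
      using not_dominated[of "set (xs @ p # ys)" u] assms(3,7) S(1) by auto
    then have "\<exists>z\<in>set (xs @ [p]). \<not> A z u"
      using False by auto
    then show ?thesis
      using spanned_by_converging_paths_insert_both[OF xpy(1) assms(2) S(1,2,3)] v_placeable[of ys]
        \<open>u \<noteq> v\<close> xpy(2,3) W(1) by auto
  qed
qed

lemma spanned_by_converging_paths_regular:
  assumes "finite W" "tournament_on W A" "W \<noteq> {}" "\<forall>x\<in>W. indeg W A x = Suc b" "1 \<le> b"
    and "\<And>u v. u \<in> W \<Longrightarrow> v \<in> W \<Longrightarrow> A u v \<Longrightarrow> spanned_by_converging_paths A (W - {u, v}) b b"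
  shows "spanned_by_converging_paths A W (Suc b) (Suc b)"
proof -
  obtain v where "v \<in> W"
    using assms(3) by blast
  then have "card {u\<in>W. A u v} = Suc b"
    using assms(4) unfolding indeg_def by blast
  then have "{u\<in>W. A u v} \<noteq> {}"
    by (metis card.empty nat.distinct(1))
  then obtain u where "u \<in> W" "A u v"
    by blast
  then show ?thesis
    using spanned_by_converging_paths_insert_arc[OF assms(1,2)] assms(4-6) \<open>v \<in> W\<close> by blast
qed

lemma spanned_by_converging_paths_card4:
  assumes "finite W" "tournament_on W A" "card W = 4"
  shows "spanned_by_converging_paths A W 2 1"
proof -
  have witness: "spanned_by_converging_paths A W 2 1"
    if "A x1 x2" "A x2 q" "A y q" "{x1, x2, q, y} = W" "distinct [x1, x2, q, y]" for x1 x2 q y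
    unfolding spanned_by_converging_paths_def converging_paths_def
    by (intro exI[of _ "[x1, x2]"] exI[of _ q] exI[of _ "[y]"]) (use that in simp)
  obtain p where p: "p \<in> W" "3 \<le> 2 * indeg W A p"
    using exists_indeg_ge_half[OF assms(1) _ assms(2)] assms(3) by fastforce
  then have "2 \<le> card {u\<in>W. A u p}"
    unfolding indeg_def by linarith
  then obtain S where "S \<subseteq> {u\<in>W. A u p}" "card S = 2"
    by (meson obtain_subset_with_card_n)
  then obtain c d where cd: "c \<in> W" "d \<in> W" "A c p" "A d p" "c \<noteq> d"
    by (auto simp: card_2_iff)
  have "c \<noteq> p" "d \<noteq> p"
    using cd p(1) tournament_on_asym[OF assms(2)] by auto
  then have "card (W - {p, c, d}) = 1"
    using assms(1,3) cd p(1) by (simp add: card_Diff_subset)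
  then obtain e where e: "W - {p, c, d} = {e}"
    by (auto simp: card_1_singleton_iff)
  then have "e \<in> W" "e \<notin> {p, c, d}"
    by auto
  note total = tournament_on_total[OF assms(2)]
  have apart: "distinct [p, c, d, e]"
    using \<open>c \<noteq> p\<close> \<open>d \<noteq> p\<close> cd(5) \<open>e \<notin> {p, c, d}\<close> by auto
  consider "A e c" | "A e d" | "A c e" "A d e" "A e p" | "A c e" "A d e" "A p e"
    using total[of e c] total[of e d] total[of e p] cd p(1) \<open>e \<in> W\<close> apart by auto
  then show ?thesis
  proof cases
    case 1
    have "{e, c, p, d} = W"
      using e cd p(1) by blast
    then show ?thesis
      using witness[of e c p d] 1 cd apart by auto
  next
    case 2
    have "{e, d, p, c} = W"
      using e cd p(1) by blast
    then show ?thesis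
      using witness[of e d p c] 2 cd apart by auto
  next
    case 3
    have "{c, e, p, d} = W"
      using e cd p(1) by blast
    then show ?thesis
      using witness[of c e p d] 3 cd apart by auto
  next
    case 4
    have "{c, p, e, d} = W"
      using e cd p(1) by blast
    then show ?thesis
      using witness[of c p e d] 4 cd apart by auto
  qed
qed

lemma spanned_by_converging_paths_regular5:
  assumes "finite W" "tournament_on W A" "card W = 5" "\<forall>v\<in>W. indeg W A v = 2"
  shows "spanned_by_converging_paths A W 2 2"
proof -
  note total = tournament_on_total[OF assms(2)] and asym = tournament_on_asym[OF assms(2)]
  obtain p where p: "p \<in> W"
    using assms(3) by fastforce
  then have "card {u\<in>W. A u p} = 2"
    using assms(4) unfolding indeg_def by blast
  then obtain c d where in_p: "{u\<in>W. A u p} = {c, d}" "c \<noteq> d"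
    by (auto simp: card_2_iff)
  then have cd: "c \<in> W" "d \<in> W" "A c p" "A d p" "c \<noteq> p" "d \<noteq> p"
    using p asym by blast+
  then have "card (W - {p, c, d}) = 2"
    using assms(1,3) p in_p(2) by (simp add: card_Diff_subset)
  then obtain e f where ef: "W - {p, c, d} = {e, f}" "e \<noteq> f"
    by (auto simp: card_2_iff)
  have witness: "spanned_by_converging_paths A W 2 2"
    if "A x1 x2" "A x2 p" "A y1 y2" "A y2 p" "{x1, x2, p, y1, y2} = W" "distinct [x1, x2, p, y1, y2]"
    for x1 x2 y1 y2
    unfolding spanned_by_converging_paths_def converging_paths_def
    by (intro exI[of _ "[x1, x2]"] exI[of _ p] exI[of _ "[y1, y2]"]) (use that in simp)
  have oriented: ?thesis if e'f': "{e', f'} = {e, f}" "A e' f'" for e' f'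
  proof -
    have out: "e' \<in> W" "e' \<notin> {p, c, d}" "f' \<in> W" "f' \<notin> {p, c, d}" "e' \<noteq> f'"
      using e'f' ef(1) asym by (auto simp: doubleton_eq_iff)
    have "A p e'" "A p f'"
      using total[of e' p] total[of f' p] in_p p out by auto
    have "{u\<in>W. A u f'} = {p, e'}"
      by (rule in_neighbours_eq_pair[OF assms(1)]) (use assms(4) out p e'f'(2) \<open>A p f'\<close> in auto)
    then have "A f' c" "A f' d"
      using total[of f' c] total[of f' d] cd out by auto
    have "A e' c \<or> A e' d"
    proof (rule ccontr)
      assume "\<not> ?thesis"
      then have "A c e'" "A d e'"
        using total[of e' c] total[of e' d] cd out by auto
      then have "{u\<in>W. A u e'} = {c, d}"
        by (intro in_neighbours_eq_pair[OF assms(1)]) (use assms(4) out cd in_p in auto)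
      then show False
        using \<open>A p e'\<close> p cd(5,6) by auto
    qed
    moreover have "{e', c, p, f', d} = W" "{e', d, p, f', c} = W"
      using ef(1) e'f'(1) cd p by blast+
    ultimately show ?thesis
      using witness[of e' c f' d] witness[of e' d f' c] \<open>A f' c\<close> \<open>A f' d\<close> cd in_p(2) out
      by auto
  qed
  have "A e f \<or> A f e"
    using total[of e f] ef by blast
  then show ?thesis
    using oriented[of e f] oriented[of f e] by (metis insert_commute)
qed

lemma exists_low_indeg_or_regular:
  assumes "finite W" "tournament_on W A" "card W = a + b + 1" "b \<le> a"
  shows "(\<exists>v\<in>W. indeg W A v < a) \<or> (a = b \<and> (\<forall>v\<in>W. indeg W A v = a))"
proof (cases "\<exists>v\<in>W. indeg W A v < a")
  case False
  then have high: "\<forall>v\<in>W. a \<le> indeg W A v"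
    by (simp add: not_less)
  obtain v where "v \<in> W" "2 * indeg W A v \<le> card W - 1"
    using exists_indeg_le_half[OF assms(1) _ assms(2)] assms(3) by fastforce
  then have "a = b"
    using high assms(3,4) by fastforce
  then show ?thesis
    using indeg_regular[OF assms(1,2) _ high] assms(3) by simp
qed simp

lemma spanned_by_converging_paths_step:
  assumes "finite W" "tournament_on W A" "card W = a + b + 1" "1 \<le> b" "b \<le> a" "3 \<le> a + b"
    and IH: "\<And>U a' b'. U \<subseteq> W \<Longrightarrow> a' + b' < a + b \<Longrightarrow> card U = a' + b' + 1 \<Longrightarrow>
               1 \<le> a' \<Longrightarrow> 1 \<le> b' \<Longrightarrow> 3 \<le> a' + b' \<Longrightarrow> spanned_by_converging_paths A U a' b'"
  shows "spanned_by_converging_paths A W a b"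
proof (cases "a + b = 3")
  case True
  then have "a = 2" "b = 1"
    using assms(4,5) by auto
  then show ?thesis
    using spanned_by_converging_paths_card4[OF assms(1,2)] assms(3) by simp
next
  case False
  then have "4 \<le> a + b" "2 \<le> a"
    using assms(4-6) by auto
  consider v where "v \<in> W" "indeg W A v \<le> a - 1" | "a = b" "\<forall>v\<in>W. indeg W A v = a"
    using exists_low_indeg_or_regular[OF assms(1-3,5)] by fastforce
  then show ?thesis
  proof cases
    case (1 v)
    then have "spanned_by_converging_paths A (W - {v}) (a - 1) b"
      using \<open>4 \<le> a + b\<close> \<open>2 \<le> a\<close> assms(1,3,4) by (intro IH) auto
    then show ?thesis
      using spanned_by_converging_paths_insert_low_indeg[OF assms(1,2) 1(1) _ 1(2)] \<open>2 \<le> a\<close> by simp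
  next
    case 2
    show ?thesis
    proof (cases "a = 2")
      case True
      then show ?thesis
        using spanned_by_converging_paths_regular5[OF assms(1,2)] 2 assms(3) by simp
    next
      case False
      have "spanned_by_converging_paths A (W - {u, v}) (a - 1) (a - 1)"
        if "u \<in> W" "v \<in> W" "A u v" for u v
      proof -
        have "u \<noteq> v"
          using that tournament_on_asym[OF assms(2)] by blast
        then show ?thesis
          using that False \<open>2 \<le> a\<close> 2(1) assms(1,3) by (intro IH) auto
      qed
      moreover have "W \<noteq> {}"
        using assms(3) by auto
      ultimately have "spanned_by_converging_paths A W (Suc (a - 1)) (Suc (a - 1))"
        using False \<open>2 \<le> a\<close> 2(2)
        by (intro spanned_by_converging_paths_regular[OF assms(1,2)]) auto
      then show ?thesis
        using \<open>2 \<le> a\<close> 2(1) by simp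
    qed
  qed
qed

lemma tournament_spanned_by_converging_paths:
  assumes "finite W" "tournament_on W A" "card W = a + b + 1" "1 \<le> a" "1 \<le> b" "3 \<le> a + b"
  shows "spanned_by_converging_paths A W a b"
  using assms
proof (induction "a + b" arbitrary: W a b rule: less_induct)
  case less
  have IH: "spanned_by_converging_paths A U a' b'"
    if "U \<subseteq> W" "a' + b' < a + b" "card U = a' + b' + 1" "1 \<le> a'" "1 \<le> b'" "3 \<le> a' + b'"
    for U a' b'
    using less.hyps[OF that(2)] that less.prems(1,2) finite_subset tournament_on_subset by metis
  show ?case
  proof (cases "b \<le> a")
    case True
    then show ?thesis
      using spanned_by_converging_paths_step[OF less.prems(1-3,5) _ less.prems(6) IH] by blast
  next
    case False
    then have "spanned_by_converging_paths A W b a"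
      using spanned_by_converging_paths_step[OF less.prems(1,2) _ less.prems(4)] less.prems(3,6) IH
      by (simp add: add.commute)
    then show ?thesis
      by (rule spanned_by_converging_paths_swap)
  qed
qed

lemma sum_lessThan_double:
  "(\<Sum>i<2 * m. f i) = (\<Sum>j<m. f (2 * j) + f (Suc (2 * j)) :: 'b :: comm_monoid_add)"
  by (induction m) (auto simp: algebra_simps)

lemma length_concat_map_upt:
  "(\<And>i. i < n \<Longrightarrow> length (G i) = l i) \<Longrightarrow> length (concat (map G [0..<n])) = (\<Sum>i<n. l i)"
  by (induction n) auto

lemma nth_concat_map_upt:
  assumes "\<And>i. i < n \<Longrightarrow> length (G i) = l i" "i < n" "q < l i"
  shows "concat (map G [0..<n]) ! ((\<Sum>t<i. l t) + q) = G i ! q"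
  using assms
proof (induction n)
  case (Suc n)
  have len: "length (concat (map G [0..<n])) = (\<Sum>t<n. l t)"
    using Suc.prems(1) by (intro length_concat_map_upt) auto
  show ?case
  proof (cases "i < n")
    case True
    have "(\<Sum>t<Suc i. l t) \<le> (\<Sum>t<n. l t)"
      using True by (intro sum_mono2) auto
    then show ?thesis
      using Suc True len by (simp add: nth_append)
  next
    case False
    then have "i = n"
      using Suc.prems(2) by simp
    then show ?thesis
      using Suc.prems len by (simp add: nth_append)
  qed
qed simp

lemma nth_concat_butlast:
  assumes "\<And>i. i < n \<Longrightarrow> length (P i) = Suc (l i)" "i < n" "q < l i"
  shows "concat (map (\<lambda>i. butlast (P i)) [0..<n]) ! ((\<Sum>t<i. l t) + q) = P i ! q"
  using nth_concat_map_upt[of n "\<lambda>i. butlast (P i)" l i q] assms by (simp add: nth_butlast)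

lemma nth_concat_butlast_Suc_mod:
  assumes pos: "\<And>i. i < n \<Longrightarrow> 0 < l i"
    and len: "\<And>i. i < n \<Longrightarrow> length (P i) = Suc (l i)"
    and closed: "\<And>i. i < n \<Longrightarrow> last (P i) = hd (P (Suc i mod n))"
    and i: "i < n" and q: "q < l i"
  shows "concat (map (\<lambda>i. butlast (P i)) [0..<n]) ! (Suc ((\<Sum>t<i. l t) + q) mod (\<Sum>t<n. l t))
           = P i ! Suc q"
proof -
  have prefix_le: "(\<Sum>t<Suc j. l t) \<le> (\<Sum>t<n. l t)" if "j < n" for j
    using that by (intro sum_mono2) auto
  show ?thesis
  proof (cases "Suc q < l i")
    case True
    then have "Suc ((\<Sum>t<i. l t) + q) < (\<Sum>t<n. l t)"
      using prefix_le[OF i] by simp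
    then show ?thesis
      using nth_concat_butlast[where P = P and l = l, OF len i True] by simp
  next
    case False
    let ?i' = "Suc i mod n"
    have "?i' < n" "0 < l ?i'"
      using i pos by simp_all
    have "Suc q = l i"
      using False q by simp
    have "P i \<noteq> []" "P ?i' \<noteq> []"
      using len[OF i] len[OF \<open>?i' < n\<close>] by auto
    have "P i ! Suc q = last (P i)"
      using \<open>Suc q = l i\<close> len[OF i] \<open>P i \<noteq> []\<close> by (simp add: last_conv_nth)
    also have "\<dots> = P ?i' ! 0"
      using closed[OF i] \<open>P ?i' \<noteq> []\<close> by (simp add: hd_conv_nth)
    finally have "P i ! Suc q = P ?i' ! 0" .
    moreover have "Suc ((\<Sum>t<i. l t) + q) mod (\<Sum>t<n. l t) = (\<Sum>t<?i'. l t) + 0"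
    proof (cases "Suc i < n")
      case True
      then show ?thesis
        using prefix_le[OF True] pos[OF True] \<open>Suc q = l i\<close> by simp
    next
      case False
      then have "n = Suc i"
        using i by simp
      then show ?thesis
        using \<open>Suc q = l i\<close>[symmetric] by simp
    qed
    ultimately show ?thesis
      using nth_concat_butlast[where P = P and l = l, OF len \<open>?i' < n\<close> \<open>0 < l ?i'\<close>] by simp
  qed
qed

lemma contains_cycle_from_blocks:
  assumes pos: "\<And>i. i < 2 * m \<Longrightarrow> 0 < l i"
    and len: "\<And>i. i < 2 * m \<Longrightarrow> length (P i) = Suc (l i)"
    and arcs: "\<And>i. i < 2 * m \<Longrightarrow> successively (\<lambda>x y. if even i then A x y else A y x) (P i)"
    and closed: "\<And>i. i < 2 * m \<Longrightarrow> last (P i) = hd (P (Suc i mod (2 * m)))"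
    and dist: "distinct (concat (map (\<lambda>i. butlast (P i)) [0..<2 * m]))"
    and sub: "set (concat (map (\<lambda>i. butlast (P i)) [0..<2 * m])) \<subseteq> V"
  shows "contains_cycle V A m l"
proof -
  define L where "L = concat (map (\<lambda>i. butlast (P i)) [0..<2 * m])"
  have length_L: "length L = (\<Sum>i<2 * m. l i)"
    unfolding L_def using len by (intro length_concat_map_upt) simp
  have in_V: "L ! j \<in> V" if "j < length L" for j
    using nth_mem[OF that] sub unfolding L_def by blast
  show ?thesis
    unfolding contains_cycle_def
  proof (intro exI[of _ "\<lambda>j. L ! j"] conjI allI impI)
    show "inj_on (\<lambda>j. L ! j) {0..<(\<Sum>i<2 * m. l i)}"
      using dist length_L unfolding L_def by (intro inj_on_nth) auto
    show "(\<lambda>j. L ! j) ` {0..<(\<Sum>i<2 * m. l i)} \<subseteq> V"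
      using in_V length_L by auto
  next
    fix i j
    assume i: "i < 2 * m" and j: "(\<Sum>t<i. l t) \<le> j \<and> j < (\<Sum>t<Suc i. l t)"
    define q where "q = j - (\<Sum>t<i. l t)"
    have q: "q < l i" "j = (\<Sum>t<i. l t) + q"
      using j unfolding q_def by auto
    show "if even i then A (L ! j) (L ! (Suc j mod (\<Sum>t<2 * m. l t)))
          else A (L ! (Suc j mod (\<Sum>t<2 * m. l t))) (L ! j)"
      using successively_nth[OF arcs[OF i], of q] len[OF i] q
        nth_concat_butlast[where P = P and l = l, OF len i q(1)]
        nth_concat_butlast_Suc_mod[where P = P and l = l, OF pos len closed i q(1)]
      unfolding L_def by simp
  qed
qed

lemma exists_partition_with_cards:
  assumes "finite V" "card V = (\<Sum>j<(m :: nat). c j)"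
  shows "\<exists>W. (\<forall>j<m. W j \<subseteq> V \<and> card (W j) = c j)
             \<and> (\<forall>i<m. \<forall>j<m. i \<noteq> j \<longrightarrow> W i \<inter> W j = {}) \<and> V = (\<Union>j<m. W j)"
  using assms
proof (induction m arbitrary: V)
  case (Suc m)
  obtain U where U: "U \<subseteq> V" "card U = c m"
    using Suc.prems obtain_subset_with_card_n[of "c m" V] by auto
  then have "card (V - U) = (\<Sum>j<m. c j)"
    using Suc.prems by (simp add: card_Diff_subset finite_subset)
  then obtain W where W: "\<forall>j<m. W j \<subseteq> V - U \<and> card (W j) = c j"
    "\<forall>i<m. \<forall>j<m. i \<noteq> j \<longrightarrow> W i \<inter> W j = {}" "V - U = (\<Union>j<m. W j)"
    using Suc.IH[of "V - U"] Suc.prems(1) by auto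
  have "\<forall>j<Suc m. (W(m := U)) j \<subseteq> V \<and> card ((W(m := U)) j) = c j"
    using W(1) U by (auto simp: less_Suc_eq)
  moreover have "\<forall>i<Suc m. \<forall>j<Suc m. i \<noteq> j \<longrightarrow> (W(m := U)) i \<inter> (W(m := U)) j = {}"
    using W(1,2) by (fastforce simp: less_Suc_eq)
  moreover have "V = (\<Union>j<Suc m. (W(m := U)) j)"
    using W(3) U(1) by (auto simp: lessThan_Suc)
  ultimately show ?case
    by blast
qed simp

lemma less_double_cases:
  assumes "i < 2 * (m :: nat)"
  obtains j where "j < m" "i = 2 * j" | j where "j < m" "i = Suc (2 * j)"
  using assms by (cases "even i") (auto elim!: evenE oddE)

locale converging_paths_partition =
  fixes V :: "'a set" and A :: "'a \<Rightarrow> 'a \<Rightarrow> bool" and m :: nat and k :: "nat \<Rightarrow> nat"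
    and X :: "nat \<Rightarrow> 'a list" and p :: "nat \<Rightarrow> 'a" and Y :: "nat \<Rightarrow> 'a list"
  assumes tournament: "tournament_on V A"
    and k_pos: "\<And>i. i < 2 * m \<Longrightarrow> 0 < k i"
    and paths: "\<And>j. j < m \<Longrightarrow> converging_paths A (X j) (p j) (Y j)"
    and length_X: "\<And>j. j < m \<Longrightarrow> length (X j) = k (2 * j)"
    and length_Y: "\<And>j. j < m \<Longrightarrow> length (Y j) = k (Suc (2 * j))"
    and disjoint: "\<And>i j. i < m \<Longrightarrow> j < m \<Longrightarrow> i \<noteq> j \<Longrightarrow>
                     set (X i @ p i # Y i) \<inter> set (X j @ p j # Y j) = {}"
    and cover: "V = (\<Union>j<m. set (X j @ p j # Y j))"
begin

definition nxt :: "nat \<Rightarrow> nat" where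
  "nxt j = (if Suc j = m then 0 else Suc j)"

definition prv :: "nat \<Rightarrow> nat" where
  "prv j = (if j = 0 then m - 1 else j - 1)"

lemma nxt_less: "j < m \<Longrightarrow> nxt j < m"
  and prv_less: "j < m \<Longrightarrow> prv j < m"
  and prv_nxt: "j < m \<Longrightarrow> prv (nxt j) = j"
  and nxt_prv: "j < m \<Longrightarrow> nxt (prv j) = j"
  unfolding nxt_def prv_def by auto

lemma X_nonempty: "j < m \<Longrightarrow> X j \<noteq> []"
  using length_X[of j] k_pos[of "2 * j"] by auto

lemma Y_nonempty: "j < m \<Longrightarrow> Y j \<noteq> []"
  using length_Y[of j] k_pos[of "Suc (2 * j)"] by auto

lemma set_part_subset: "j < m \<Longrightarrow> set (X j @ p j # Y j) \<subseteq> V"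
  using cover by blast

(* Block 2j runs along X j into p j and block 2j+1 runs back from p j along Y j.  The arc between
   hd (Y j) and hd (X (nxt j)) lengthens block 2 (nxt j) if it is forward, block 2j+1 otherwise. *)
definition forward :: "nat \<Rightarrow> bool" where
  "forward j \<longleftrightarrow> A (hd (Y j)) (hd (X (nxt j)))"

lemma backward:
  assumes "j < m" "\<not> forward j"
  shows "A (hd (X (nxt j))) (hd (Y j))"
proof -
  have in_parts: "hd (Y j) \<in> set (X j @ p j # Y j)"
    "hd (X (nxt j)) \<in> set (X (nxt j) @ p (nxt j) # Y (nxt j))"
    using X_nonempty Y_nonempty nxt_less assms(1) by auto
  have "hd (Y j) \<noteq> hd (X (nxt j))"
  proof (cases "nxt j = j")
    case True
    then show ?thesis
      using paths[OF assms(1)] X_nonempty[OF assms(1)] Y_nonempty[OF assms(1)]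
      unfolding converging_paths_def by (auto simp: neq_Nil_conv)
  next
    case False
    then show ?thesis
      using disjoint[OF nxt_less[OF assms(1)] assms(1) False] in_parts by (metis IntI empty_iff)
  qed
  moreover have "hd (Y j) \<in> V" "hd (X (nxt j)) \<in> V"
    using in_parts set_part_subset assms(1) nxt_less by blast+
  ultimately show ?thesis
    using tournament_on_total[OF tournament] assms(2) unfolding forward_def by blast
qed

definition dilated :: "nat \<Rightarrow> bool" where
  "dilated i \<longleftrightarrow> (if even i then forward (prv (i div 2)) else \<not> forward (i div 2))"

definition len :: "nat \<Rightarrow> nat" where
  "len i = k i + of_bool (dilated i)"

definition block :: "nat \<Rightarrow> 'a list" where
  "block i = (let j = i div 2 in
     if even i then (if forward (prv j) then [hd (Y (prv j))] else []) @ X j @ [p j]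
     else p j # rev (Y j) @ (if forward j then [] else [hd (X (nxt j))]))"

lemma k_le_len: "k i \<le> len i"
  unfolding len_def by simp

lemma block_even: "block (2 * j) = (if forward (prv j) then [hd (Y (prv j))] else []) @ X j @ [p j]"
  unfolding block_def by simp

lemma block_odd: "block (Suc (2 * j)) = p j # rev (Y j) @ (if forward j then [] else [hd (X (nxt j))])"
  unfolding block_def by simp

lemma len_even: "len (2 * j) = k (2 * j) + of_bool (forward (prv j))"
  unfolding len_def dilated_def by simp

lemma len_odd: "len (Suc (2 * j)) = k (Suc (2 * j)) + of_bool (\<not> forward j)"
  unfolding len_def dilated_def by simp

lemma length_block: "i < 2 * m \<Longrightarrow> length (block i) = Suc (len i)"
  by (erule less_double_cases) (simp_all add: block_even block_odd len_even len_odd length_X length_Y)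

lemma successively_block:
  assumes "i < 2 * m"
  shows "successively (\<lambda>x y. if even i then A x y else A y x) (block i)"
  using assms
proof (cases rule: less_double_cases)
  case (1 j)
  have "successively A (X j @ [p j])"
    using paths[OF 1(1)] unfolding converging_paths_def by blast
  moreover have "A (hd (Y (prv j))) (hd (X j @ [p j]))" if "forward (prv j)"
    using that nxt_prv[OF 1(1)] X_nonempty[OF 1(1)] unfolding forward_def by simp
  ultimately show ?thesis
    using 1(2) by (simp add: block_even successively_Cons)
next
  case (2 j)
  have "successively A (Y j @ [p j])"
    using paths[OF 2(1)] unfolding converging_paths_def by blast
  moreover have "A (hd (X (nxt j))) (hd (Y j @ [p j]))" if "\<not> forward j"
    using backward[OF 2(1) that] Y_nonempty[OF 2(1)] by simp
  ultimately have "successively A (rev (block i))"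
    using 2(2) by (simp add: block_odd successively_Cons successively_append_iff)
  then show ?thesis
    using 2(2) by simp
qed

lemma last_block: "i < 2 * m \<Longrightarrow> last (block i) = hd (block (Suc i mod (2 * m)))"
proof (erule less_double_cases)
  fix j
  assume "j < m" "i = 2 * j"
  then show ?thesis
    by (simp add: block_even block_odd)
next
  fix j
  assume j: "j < m" "i = Suc (2 * j)"
  then have "Suc i mod (2 * m) = 2 * nxt j"
    unfolding nxt_def by auto
  then show ?thesis
    using j prv_nxt[OF j(1)] X_nonempty[OF nxt_less[OF j(1)]] Y_nonempty[OF j(1)]
    by (simp add: block_even block_odd last_rev)
qed


lemma set_butlast_block_even:
  "set (butlast (block (2 * j))) = (if forward (prv j) then {hd (Y (prv j))} else {}) \<union> set (X j)"
  unfolding block_even by (simp flip: append_assoc)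

lemma set_butlast_block_odd:
  assumes "j < m"
  shows "set (butlast (block (Suc (2 * j)))) = insert (p j) (if forward j then set (tl (Y j)) else set (Y j))"
proof -
  obtain y ys where "Y j = y # ys"
    using Y_nonempty[OF assms] by (cases "Y j") auto
  then show ?thesis
    unfolding block_odd by (simp add: butlast_append)
qed

abbreviation blocks :: "'a list" where
  "blocks \<equiv> concat (map (\<lambda>i. butlast (block i)) [0..<2 * m])"

lemma set_blocks_subset: "set blocks \<subseteq> V"
proof
  fix v
  assume "v \<in> set blocks"
  then obtain i where i: "i < 2 * m" "v \<in> set (butlast (block i))"
    by auto
  from i(1) show "v \<in> V"
  proof (cases rule: less_double_cases)
    case (1 j)
    then show ?thesis
      using i(2) set_part_subset[OF prv_less[OF 1(1)]] set_part_subset[OF 1(1)]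
        Y_nonempty[OF prv_less[OF 1(1)]]
      by (auto simp: set_butlast_block_even split: if_splits)
  next
    case (2 j)
    then show ?thesis
      using i(2) set_part_subset[OF 2(1)] list.set_sel(2)[OF Y_nonempty[OF 2(1)]]
      by (auto simp: set_butlast_block_odd split: if_splits)
  qed
qed

lemma V_subset_set_blocks: "V \<subseteq> set blocks"
proof
  fix v
  assume "v \<in> V"
  then obtain j where j: "j < m" "v \<in> set (X j @ p j # Y j)"
    using cover by blast
  have block_subset: "set (butlast (block i)) \<subseteq> set blocks" if "i < 2 * m" for i
    using that by auto
  consider "v \<in> set (X j) \<or> v = p j" | "v \<in> set (Y j)" "forward j" "v = hd (Y j)"
    | "v \<in> set (Y j)" "\<not> (forward j \<and> v = hd (Y j))"
    using j(2) by auto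
  then show "v \<in> set blocks"
  proof cases
    case 1
    then show ?thesis
      using block_subset[of "2 * j"] block_subset[of "Suc (2 * j)"] j(1)
      by (auto simp: set_butlast_block_even set_butlast_block_odd)
  next
    case 2
    then show ?thesis
      using block_subset[of "2 * nxt j"] nxt_less[OF j(1)] prv_nxt[OF j(1)]
      by (auto simp: set_butlast_block_even)
  next
    case 3
    then have "v \<in> (if forward j then set (tl (Y j)) else set (Y j))"
      by (cases "Y j") auto
    then show ?thesis
      using block_subset[of "Suc (2 * j)"] j(1) by (auto simp: set_butlast_block_odd)
  qed
qed

lemma set_blocks: "set blocks = V"
  using set_blocks_subset V_subset_set_blocks by blast

lemma sum_dilated:
  "(\<Sum>i<2 * m. g (dilated i)) = (\<Sum>j<m. g (forward j) + g (\<not> forward j) :: 'b :: comm_monoid_add)"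
proof -
  have "bij_betw prv {..<m} {..<m}"
    by (rule bij_betw_byWitness[where f' = nxt]) (auto simp: prv_nxt nxt_prv prv_less nxt_less)
  then have "(\<Sum>j<m. g (forward (prv j))) = (\<Sum>j<m. g (forward j))"
    by (rule sum.reindex_bij_betw)
  then show ?thesis
    unfolding sum_lessThan_double dilated_def by (simp add: sum.distrib)
qed

lemma card_V: "card V = m + (\<Sum>i<2 * m. k i)"
proof -
  have "card V = (\<Sum>j<m. card (set (X j @ p j # Y j)))"
    unfolding cover using disjoint by (intro card_UN_disjoint) auto
  also have "\<dots> = (\<Sum>j<m. Suc (k (2 * j) + k (Suc (2 * j))))"
  proof (rule sum.cong)
    fix j
    assume "j \<in> {..<m}"
    then show "card (set (X j @ p j # Y j)) = Suc (k (2 * j) + k (Suc (2 * j)))"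
      using distinct_card[of "X j @ p j # Y j"] paths length_X length_Y
      unfolding converging_paths_def by simp
  qed simp
  finally show ?thesis
    by (simp add: sum_Suc sum.distrib sum_lessThan_double)
qed

lemma sum_len: "(\<Sum>i<2 * m. len i) = card V"
proof -
  have "(\<Sum>i<2 * m. of_bool (dilated i)) = (\<Sum>j<m. 1 :: nat)"
    unfolding sum_dilated by (rule sum.cong) simp_all
  then show ?thesis
    unfolding len_def sum.distrib card_V by simp
qed

lemma distinct_blocks: "distinct blocks"
proof (rule card_distinct)
  have "length blocks = (\<Sum>i<2 * m. len i)"
    using length_block by (intro length_concat_map_upt) simp
  then show "card (set blocks) = length blocks"
    using set_blocks sum_len by simp
qed

lemma card_non_dilated: "card {i. i < 2 * m \<and> len i = k i} = m"
proof -
  have "{i. i < 2 * m \<and> len i = k i} = {..<2 * m} \<inter> {i. \<not> dilated i}"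
    unfolding len_def by auto
  then have "card {i. i < 2 * m \<and> len i = k i} = (\<Sum>i<2 * m. of_bool (\<not> dilated i))"
    by simp
  also have "\<dots> = (\<Sum>j<m. 1)"
    unfolding sum_dilated[of "\<lambda>b. of_bool (\<not> b) :: nat"] by (rule sum.cong) simp_all
  finally show ?thesis
    by simp
qed

lemma contains_cycle_len: "contains_cycle V A m len"
proof (rule contains_cycle_from_blocks)
  show "0 < len i" if "i < 2 * m" for i
    using k_pos[OF that] unfolding len_def by simp
qed (use length_block successively_block last_block distinct_blocks set_blocks in auto)

end

theorem proposition8:
  fixes V :: "'a set" and A :: "'a \<Rightarrow> 'a \<Rightarrow> bool" and m :: nat and k :: "nat \<Rightarrow> nat"
  assumes "m \<ge> 2"
    and "\<forall>i<2*m. k i \<ge> 1"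
    and "\<forall>i<2*m. even i \<longrightarrow> k i + k (Suc i) \<ge> 3"
    and "tournament V A"
    and "card V = m + (\<Sum>i<2*m. k i)"
  shows "\<exists>l :: nat \<Rightarrow> nat. (\<forall>i<2*m. k i \<le> l i)
           \<and> m \<le> card {i. i < 2*m \<and> l i = k i}
           \<and> contains_cycle V A m l"
proof -
  have fin: "finite V" and tour: "tournament_on V A"
    using assms(4) tournament_imp_tournament_on unfolding tournament_def by auto
  have "card V = (\<Sum>j<m. k (2 * j) + k (Suc (2 * j)) + 1)"
    using assms(5) by (simp add: sum_lessThan_double sum.distrib sum_Suc)
  from exists_partition_with_cards[OF fin this] obtain W
    where W: "\<forall>j<m. W j \<subseteq> V \<and> card (W j) = k (2 * j) + k (Suc (2 * j)) + 1"
      "\<forall>i<m. \<forall>j<m. i \<noteq> j \<longrightarrow> W i \<inter> W j = {}" "V = (\<Union>j<m. W j)"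
    by blast
  have "spanned_by_converging_paths A (W j) (k (2 * j)) (k (Suc (2 * j)))" if "j < m" for j
    using W(1) assms(2,3) that finite_subset[OF _ fin] tournament_on_subset[OF tour]
    by (intro tournament_spanned_by_converging_paths) auto
  then have "\<forall>j. \<exists>xs q ys. j < m \<longrightarrow> converging_paths A xs q ys
               \<and> length xs = k (2 * j) \<and> length ys = k (Suc (2 * j)) \<and> set (xs @ q # ys) = W j"
    unfolding spanned_by_converging_paths_def by blast
  then obtain X p Y where "\<forall>j. j < m \<longrightarrow> converging_paths A (X j) (p j) (Y j)
               \<and> length (X j) = k (2 * j) \<and> length (Y j) = k (Suc (2 * j)) \<and> set (X j @ p j # Y j) = W j"
    by metis
  then interpret converging_paths_partition V A m k X p Y
    using tour assms(2) W(2,3) by unfold_locales auto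
  show ?thesis
    using k_le_len card_non_dilated contains_cycle_len by (intro exI[of _ len]) simp
qed

end
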